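(* Let $m\in\mathbb{N}$, $d_1,\dots,d_m\in\mathbb{R}$, $\alpha_1,\dots,\alpha_m>0$, $\beta>0$ and $\nu\in\mathbb{R}$. Let $\gamma$ be a real root of the characteristic equation $$\sum_{i=1}^{m}\frac{d_i\,\Gamma(1+\gamma)}{\Gamma(1+\gamma-\alpha_i)}=\nu^2,$$ and suppose there is no positive integer $k$ such that $\gamma+\beta k$ is also a root of this equation. Then, for any constant $c_0$, the series $$u(x)=c_0\sum_{n=0}^{\infty}\frac{(-1)^n x^{\gamma+\beta n}}{\displaystyle\prod_{k=1}^{n}\left(\sum_{i=1}^{m}\frac{d_i\,\Gamma(1+\gamma+\beta k)}{\Gamma(1+\gamma+\beta k-\alpha_i)}-\nu^2\right)}$$ (where the empty product for $n=0$ equals $1$) converges pointwise for every $x>0$.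
   Context: This series is the candidate fractional power series solution of the generalized fractional Bessel equation $\sum_{i=1}^{m}d_i x^{\alpha_i}D^{\alpha_i}u(x)+(x^\beta-\nu^2)u(x)=0$, $x>0$, where $D^{\alpha}$ is the Caputo derivative: for $n-1<\alpha<n$, $n\in\mathbb{N}$, $D^{\alpha}u(x)=\frac{1}{\Gamma(n-\alpha)}\int_0^x (x-t)^{n-\alpha-1}u^{(n)}(t)\,dt$, and for $\alpha=n\in\mathbb{N}$ it is the ordinary derivative $u^{(n)}$. Quotients $\Gamma(a)/\Gamma(b)$ are understood with $1/\Gamma$ as an entire function, vanishing at the nonpositive integers. *)

theory Defs
  imports "HOL-Analysis.Analysis"
begin

text \<open>Gamma quotient Gamma(a)/Gamma(b), with 1/Gamma read as the entire function rGamma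
  (vanishing at the nonpositive integers).\<close>
definition gamma_quot :: "real \<Rightarrow> real \<Rightarrow> real" where
  "gamma_quot a b = Gamma a * rGamma b"

definition char_fun :: "nat \<Rightarrow> (nat \<Rightarrow> real) \<Rightarrow> (nat \<Rightarrow> real) \<Rightarrow> real \<Rightarrow> real" where
  "char_fun m d \<alpha> s = (\<Sum>i=1..m. d i * gamma_quot (1 + s) (1 + s - \<alpha> i))"

end

theory Submission
  imports Defs "HOL-Real_Asymp.Real_Asymp"
begin

text \<open>For \<open>a > 0\<close> the quotient \<open>\<Gamma>(1+s)/\<Gamma>(1+s-a)\<close> grows without bound, and faster the larger
  \<open>a\<close> is; both facts follow from the mean value theorem for \<open>ln \<Gamma>\<close>, whose derivative \<open>\<psi>\<close> is
  increasing and unbounded. Hence a linear combination of such quotients that does not vanish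
  identically is dominated by its term with the largest exponent and tends to infinity in
  absolute value. The characteristic function cannot vanish identically: then \<open>\<nu> = 0\<close>, as \<open>\<gamma>\<close>
  is a root, and \<open>\<gamma> + \<beta>\<close> would be a root too. So the factors of the denominators grow without
  bound and the ratio test applies.\<close>

lemma Digamma_real_at_top: "filterlim (Digamma :: real \<Rightarrow> real) at_top at_top"
  unfolding filterlim_at_top
proof
  fix M :: real
  obtain n where n: "harm n \<ge> M + euler_mascheroni"
    using harm_at_top by (auto simp: filterlim_at_top eventually_sequentially)
  show "eventually (\<lambda>t. Digamma t \<ge> M) at_top"
    using eventually_ge_at_top[of "real (Suc n)"]
  proof eventually_elim
    case (elim t)
    have "Digamma (real (Suc n)) = harm n - euler_mascheroni"
      using Digamma_of_nat[of n] by simp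
    moreover have "Digamma (real (Suc n)) \<le> Digamma t"
      using elim by (intro Digamma_real_mono) auto
    ultimately show ?case using n by linarith
  qed
qed

lemma ln_Gamma_increment_ge_Digamma:
  fixes t h :: real
  assumes "t > 0" "h > 0"
  shows "h * Digamma t \<le> ln_Gamma (t + h) - ln_Gamma t"
proof -
  have "\<And>x. t \<le> x \<Longrightarrow> x \<le> t + h \<Longrightarrow> DERIV ln_Gamma x :> Digamma x"
    using assms by (intro has_field_derivative_ln_Gamma_real) auto
  then obtain z where z: "t < z" "ln_Gamma (t + h) - ln_Gamma t = h * Digamma z"
    using MVT2[of t "t + h" ln_Gamma Digamma] assms by auto
  have "Digamma t \<le> Digamma z"
    using z assms by (intro Digamma_real_mono) auto
  then show ?thesis
    using z assms by (simp add: mult_left_mono)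
qed

lemma ln_Gamma_increment_at_top:
  fixes c e :: real
  assumes "c < e"
  shows "filterlim (\<lambda>s. ln_Gamma (s + e) - ln_Gamma (s + c)) at_top at_top"
proof (rule filterlim_at_top_mono)
  have "filterlim (\<lambda>s::real. s + c) at_top at_top"
    by real_asymp
  then show "filterlim (\<lambda>s. (e - c) * Digamma (s + c)) at_top at_top"
    using assms by (intro filterlim_tendsto_pos_mult_at_top[OF tendsto_const]
        filterlim_compose[OF Digamma_real_at_top]) auto
  show "eventually (\<lambda>s. (e - c) * Digamma (s + c) \<le> ln_Gamma (s + e) - ln_Gamma (s + c)) at_top"
    using eventually_gt_at_top[of "-c"]
  proof eventually_elim
    case (elim s)
    then show ?case
      using ln_Gamma_increment_ge_Digamma[of "s + c" "e - c"] assms by (simp add: algebra_simps)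
  qed
qed

lemma gamma_quot_eq_exp_ln_Gamma:
  fixes s a :: real
  assumes "a > 0" "a - 1 < s"
  shows "gamma_quot (1 + s) (1 + s - a) = exp (ln_Gamma (1 + s) - ln_Gamma (1 + s - a))"
proof -
  have "1 + s > 0" "1 + s - a > 0"
    using assms by auto
  then show ?thesis
    unfolding gamma_quot_def rGamma_inverse_Gamma
    by (simp add: Gamma_real_pos_exp exp_diff divide_inverse)
qed

lemma gamma_quot_at_top:
  fixes a :: real
  assumes "a > 0"
  shows "filterlim (\<lambda>s. gamma_quot (1 + s) (1 + s - a)) at_top at_top"
proof -
  have "filterlim (\<lambda>s. ln_Gamma (s + 1) - ln_Gamma (s + (1 - a))) at_top at_top"
    using assms by (intro ln_Gamma_increment_at_top) auto
  then have lim: "filterlim (\<lambda>s. exp (ln_Gamma (1 + s) - ln_Gamma (1 + s - a))) at_top at_top"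
    by (intro filterlim_compose[OF exp_at_top]) (simp add: algebra_simps)
  have eq: "eventually (\<lambda>s. exp (ln_Gamma (1 + s) - ln_Gamma (1 + s - a)) =
      gamma_quot (1 + s) (1 + s - a)) at_top"
    using eventually_gt_at_top[of "a - 1"]
    by eventually_elim (use gamma_quot_eq_exp_ln_Gamma assms in auto)
  show ?thesis
    using filterlim_cong[OF refl refl eq] lim by simp
qed

lemma gamma_quot_ratio_tendsto_0:
  fixes a b :: real
  assumes "0 < a" "a < b"
  shows "((\<lambda>s. gamma_quot (1 + s) (1 + s - a) / gamma_quot (1 + s) (1 + s - b)) \<longlongrightarrow> 0) at_top"
proof -
  have "filterlim (\<lambda>s. ln_Gamma (s + (1 - a)) - ln_Gamma (s + (1 - b))) at_top at_top"
    using assms by (intro ln_Gamma_increment_at_top) auto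
  then have "((\<lambda>s. exp (ln_Gamma (1 + s - b) - ln_Gamma (1 + s - a))) \<longlongrightarrow> 0) at_top"
    by (intro filterlim_compose[OF exp_at_bot])
      (simp add: filterlim_uminus_at_top algebra_simps)
  moreover have "eventually (\<lambda>s. exp (ln_Gamma (1 + s - b) - ln_Gamma (1 + s - a)) =
      gamma_quot (1 + s) (1 + s - a) / gamma_quot (1 + s) (1 + s - b)) at_top"
    using eventually_gt_at_top[of "b - 1"]
  proof eventually_elim
    case (elim s)
    then show ?case
      using gamma_quot_eq_exp_ln_Gamma[of a s] gamma_quot_eq_exp_ln_Gamma[of b s] assms
      by (simp add: exp_diff[symmetric])
  qed
  ultimately show ?thesis
    by (rule Lim_transform_eventually)
qed

lemma abs_sum_at_top_if_dominant_term:
  fixes g :: "'b \<Rightarrow> 'i \<Rightarrow> real" and D :: "'i \<Rightarrow> real"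
  assumes "finite B" "a \<in> B" "D a \<noteq> 0"
    and dominant: "\<And>b. b \<in> B - {a} \<Longrightarrow> ((\<lambda>s. g s b / g s a) \<longlongrightarrow> 0) F"
    and at_top: "filterlim (\<lambda>s. g s a) at_top F"
  shows "filterlim (\<lambda>s. \<bar>\<Sum>b\<in>B. D b * g s b\<bar>) at_top F"
proof -
  define H where "H s = D a + (\<Sum>b\<in>B - {a}. D b * (g s b / g s a))" for s
  have "(H \<longlongrightarrow> D a + (\<Sum>b\<in>B - {a}. D b * 0)) F"
    unfolding H_def by (intro tendsto_intros dominant)
  then have "((\<lambda>s. \<bar>H s\<bar>) \<longlongrightarrow> \<bar>D a\<bar>) F"
    by (simp add: tendsto_rabs)
  then have lim: "filterlim (\<lambda>s. \<bar>H s\<bar> * g s a) at_top F"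
    using \<open>D a \<noteq> 0\<close> by (intro filterlim_tendsto_pos_mult_at_top[OF _ _ at_top]) auto
  have eq: "eventually (\<lambda>s. \<bar>H s\<bar> * g s a = \<bar>\<Sum>b\<in>B. D b * g s b\<bar>) F"
    using at_top[unfolded filterlim_at_top, rule_format, of 1]
  proof eventually_elim
    case (elim s)
    have "(\<Sum>b\<in>B. D b * g s b) = D a * g s a + (\<Sum>b\<in>B - {a}. D b * g s b)"
      using assms(1,2) by (simp add: sum.remove)
    also have "\<dots> = H s * g s a"
      using elim unfolding H_def by (simp add: algebra_simps sum_distrib_left sum_distrib_right)
    finally show ?case using elim by (simp add: abs_mult)
  qed
  show ?thesis
    using filterlim_cong[OF refl refl eq] lim by simp
qed

lemma abs_gamma_quot_combination_at_top:
  fixes w \<alpha> :: "'i \<Rightarrow> real"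
  assumes "finite I" and pos: "\<And>i. i \<in> I \<Longrightarrow> \<alpha> i > 0"
    and nonzero: "\<exists>s. (\<Sum>i\<in>I. w i * gamma_quot (1 + s) (1 + s - \<alpha> i)) \<noteq> 0"
  shows "filterlim (\<lambda>s. \<bar>\<Sum>i\<in>I. w i * gamma_quot (1 + s) (1 + s - \<alpha> i)\<bar>) at_top at_top"
proof -
  define g where "g s a = gamma_quot (1 + s) (1 + s - a)" for s a :: real
  define D where "D a = (\<Sum>i\<in>{i\<in>I. \<alpha> i = a}. w i)" for a
  define B where "B = {a \<in> \<alpha> ` I. D a \<noteq> 0}"
  have "finite B"
    using \<open>finite I\<close> by (simp add: B_def)
  have B_pos: "a > 0" if "a \<in> B" for a
    using that pos by (auto simp: B_def)
  have grouped: "(\<Sum>i\<in>I. w i * g s (\<alpha> i)) = (\<Sum>a\<in>B. D a * g s a)" for s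
  proof -
    have "(\<Sum>i\<in>I. w i * g s (\<alpha> i)) = (\<Sum>a\<in>\<alpha> ` I. \<Sum>i\<in>{i\<in>I. \<alpha> i = a}. w i * g s (\<alpha> i))"
      by (rule sum.image_gen[OF \<open>finite I\<close>])
    also have "\<dots> = (\<Sum>a\<in>\<alpha> ` I. D a * g s a)"
      unfolding D_def sum_distrib_right by (intro sum.cong refl) auto
    also have "\<dots> = (\<Sum>a\<in>B. D a * g s a)"
      unfolding B_def using \<open>finite I\<close> by (intro sum.mono_neutral_right) auto
    finally show ?thesis .
  qed
  obtain s where "(\<Sum>i\<in>I. w i * g s (\<alpha> i)) \<noteq> 0"
    using nonzero unfolding g_def by blast
  then have "B \<noteq> {}"
    unfolding grouped by auto
  define a where "a = Max B"
  have "a \<in> B"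
    using \<open>finite B\<close> \<open>B \<noteq> {}\<close> by (simp add: a_def)
  have "filterlim (\<lambda>s. \<bar>\<Sum>i\<in>I. w i * g s (\<alpha> i)\<bar>) at_top at_top"
    unfolding grouped
  proof (rule abs_sum_at_top_if_dominant_term[OF \<open>finite B\<close> \<open>a \<in> B\<close>])
    show "D a \<noteq> 0"
      using \<open>a \<in> B\<close> by (simp add: B_def)
    show "filterlim (\<lambda>s. g s a) at_top at_top"
      unfolding g_def using \<open>a \<in> B\<close> by (intro gamma_quot_at_top B_pos)
    fix b
    assume "b \<in> B - {a}"
    moreover have "b \<le> a"
      using \<open>b \<in> B - {a}\<close> \<open>finite B\<close> by (simp add: a_def)
    ultimately show "((\<lambda>s. g s b / g s a) \<longlongrightarrow> 0) at_top"
      unfolding g_def by (intro gamma_quot_ratio_tendsto_0 B_pos) auto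
  qed
  then show ?thesis
    by (simp add: g_def)
qed

lemma summable_power_div_prod:
  fixes z :: "'a :: {real_normed_field, banach}" and p :: "nat \<Rightarrow> 'a"
  assumes "filterlim (\<lambda>k. norm (p k)) at_top sequentially"
  shows "summable (\<lambda>n. z ^ n / (\<Prod>k=1..n. p k))"
proof -
  obtain N where N: "\<And>k. k \<ge> N \<Longrightarrow> norm (p k) \<ge> 2 * norm z + 1"
    using assms by (auto simp: filterlim_at_top eventually_sequentially)
  show ?thesis
  proof (rule summable_ratio_test[of "1/2" N])
    fix n assume "n \<ge> N"
    then have big: "norm (p (Suc n)) \<ge> 2 * norm z + 1" using N by simp
    moreover have "norm (p (Suc n)) > 0"
      using big norm_ge_zero[of z] by linarith
    ultimately have ratio: "norm (z / p (Suc n)) \<le> 1/2"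
      by (simp add: field_simps norm_divide)
    have succ_term: "z ^ Suc n / (\<Prod>k=1..Suc n. p k) = z ^ n / (\<Prod>k=1..n. p k) * (z / p (Suc n))"
      by (simp add: prod.nat_ivl_Suc' field_simps)
    have "norm (z ^ n / (\<Prod>k=1..n. p k) * (z / p (Suc n))) \<le> norm (z ^ n / (\<Prod>k=1..n. p k)) * (1/2)"
      unfolding norm_mult by (rule mult_left_mono[OF ratio norm_ge_zero])
    then show "norm (z ^ Suc n / (\<Prod>k=1..Suc n. p k)) \<le> 1/2 * norm (z ^ n / (\<Prod>k=1..n. p k))"
      unfolding succ_term by linarith
  qed simp
qed

lemma abs_char_fun_at_top:
  assumes "\<forall>i\<in>{1..m}. \<alpha> i > 0" "\<exists>s. char_fun m d \<alpha> s \<noteq> 0"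
  shows "filterlim (\<lambda>s. \<bar>char_fun m d \<alpha> s\<bar>) at_top at_top"
  using assms unfolding char_fun_def by (intro abs_gamma_quot_combination_at_top) auto

theorem lemma2p1:
  fixes m :: nat and d \<alpha> :: "nat \<Rightarrow> real" and \<beta> \<nu> \<gamma> c0 x :: real
  assumes "\<forall>i\<in>{1..m}. \<alpha> i > 0"
    and "\<beta> > 0"
    and "char_fun m d \<alpha> \<gamma> = \<nu>\<^sup>2"
    and "\<not> (\<exists>k::nat. k \<ge> 1 \<and> char_fun m d \<alpha> (\<gamma> + \<beta> * real k) = \<nu>\<^sup>2)"
    and "x > 0"
  shows "summable (\<lambda>n::nat. c0 * ((-1) ^ n * x powr (\<gamma> + \<beta> * real n)
            / (\<Prod>k=1..n. char_fun m d \<alpha> (\<gamma> + \<beta> * real k) - \<nu>\<^sup>2)))"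
proof -
  let ?p = "\<lambda>k::nat. char_fun m d \<alpha> (\<gamma> + \<beta> * real k) - \<nu>\<^sup>2"
  have "char_fun m d \<alpha> (\<gamma> + \<beta>) \<noteq> \<nu>\<^sup>2"
    using assms(4) by (metis mult.right_neutral of_nat_1 order_refl)
  then have "\<exists>s. char_fun m d \<alpha> s \<noteq> 0"
    using assms(3) by (metis zero_eq_power2)
  then have "filterlim (\<lambda>s. \<bar>char_fun m d \<alpha> s\<bar>) at_top at_top"
    by (rule abs_char_fun_at_top[OF assms(1)])
  moreover have "filterlim (\<lambda>k::nat. \<gamma> + \<beta> * real k) at_top sequentially"
    using assms(2) by real_asymp
  ultimately have "filterlim (\<lambda>k. \<bar>char_fun m d \<alpha> (\<gamma> + \<beta> * real k)\<bar>) at_top sequentially"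
    by (rule filterlim_compose)
  then have "filterlim (\<lambda>k. - \<nu>\<^sup>2 + \<bar>char_fun m d \<alpha> (\<gamma> + \<beta> * real k)\<bar>) at_top sequentially"
    by (rule filterlim_tendsto_add_at_top[OF tendsto_const])
  then have "filterlim (\<lambda>k. norm (?p k)) at_top sequentially"
    unfolding real_norm_def
    by (rule filterlim_at_top_mono) (intro always_eventually allI, use zero_le_power2[of \<nu>] in arith)
  then have "summable (\<lambda>n. (- (x powr \<beta>)) ^ n / (\<Prod>k=1..n. ?p k))"
    by (rule summable_power_div_prod)
  then have "summable (\<lambda>n. c0 * x powr \<gamma> * ((- (x powr \<beta>)) ^ n / (\<Prod>k=1..n. ?p k)))"
    by (rule summable_mult)
  moreover have "c0 * ((-1) ^ n * x powr (\<gamma> + \<beta> * real n) / (\<Prod>k=1..n. ?p k)) =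
      c0 * x powr \<gamma> * ((- (x powr \<beta>)) ^ n / (\<Prod>k=1..n. ?p k))" for n
  proof -
    have "x powr (\<gamma> + \<beta> * real n) = x powr \<gamma> * (x powr \<beta>) ^ n"
      using \<open>x > 0\<close> by (simp add: powr_add powr_realpow[symmetric] powr_powr)
    then show ?thesis
      unfolding power_minus[of "x powr \<beta>"] by (simp only: mult_ac times_divide_eq_right)
  qed
  ultimately show ?thesis
    by (simp only:)
qed

end
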